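(* Let $p,p'\in(0,1)$ be constants with $p'<p$. For every one-sided $p$-error PACA $C$ there is a one-sided $p'$-error PACA $C'$ with $L(C)=L(C')$. Moreover, if $C$ has time complexity $T(n)$, then $C'$ has time complexity $O(T(n))$.
   Context: PACA: a bounded one-dimensional CA with state set $Q$, input alphabet $\Sigma\subseteq Q$, accepting states $A\subseteq Q$, boundary symbol $\$$ and two local transition functions $\delta_0,\delta_1$; at each step every cell independently tosses a fair coin $c$ and updates by $\delta_c$ applied to its left neighbor, itself and its right neighbor ($\$$ beyond borders). On input $x\in\Sigma^n$ (initial configuration $x$), a computation is accepting if at some step all cells are simultaneously in $A$. $C$ has time complexity $T$ if every accepting computation on an input of length $n$ first reaches $A^n$ at a step $<T(n)$; every PACA is required to have some such time complexity. For $p\in[0,1)$, $C$ is a one-sided $p$-error PACA for $L$ if for every input $x$: $x\in L\iff\Pr[C\text{ accepts }x]\ge1-p$ and $x\notin L\iff\Pr[C\text{ accepts }x]=0$ (probability over coin tosses); then $L(C)=L$. *)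

theory Defs
  imports Complex_Main "HOL-Library.FuncSet" "HOL-Library.Landau_Symbols"
begin

text \<open>States are natural numbers
(a finite set Q of them), the boundary symbol is represented by None,
and the two local transition functions are delta False (coin 0) and
delta True (coin 1).\<close>

record paca =
  states :: "nat set"
  inp    :: "nat set"
  acc    :: "nat set"
  delta  :: "bool \<Rightarrow> nat option \<Rightarrow> nat \<Rightarrow> nat option \<Rightarrow> nat"

definition wf_paca :: "paca \<Rightarrow> bool" where
  "wf_paca C \<longleftrightarrow> finite (states C) \<and> inp C \<subseteq> states C \<and> acc C \<subseteq> states C \<and>
     (\<forall>b l q r. q \<in> states C \<and> l \<in> insert None (Some ` states C)
                \<and> r \<in> insert None (Some ` states C) \<longrightarrow> delta C b l q r \<in> states C)"

definition step :: "paca \<Rightarrow> (nat \<Rightarrow> bool) \<Rightarrow> nat list \<Rightarrow> nat list" where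
  "step C c xs = map (\<lambda>i. delta C (c i)
        (if i = 0 then None else Some (xs ! (i - 1)))
        (xs ! i)
        (if Suc i = length xs then None else Some (xs ! Suc i))) [0..<length xs]"

primrec run :: "paca \<Rightarrow> nat list \<Rightarrow> (nat \<Rightarrow> nat \<Rightarrow> bool) \<Rightarrow> nat \<Rightarrow> nat list" where
  "run C x cs 0 = x"
| "run C x cs (Suc t) = step C (cs t) (run C x cs t)"

definition accepting_conf :: "paca \<Rightarrow> nat list \<Rightarrow> bool" where
  "accepting_conf C xs \<longleftrightarrow> set xs \<subseteq> acc C"

definition has_time_complexity :: "paca \<Rightarrow> (nat \<Rightarrow> nat) \<Rightarrow> bool" where
  "has_time_complexity C T \<longleftrightarrow>
     (\<forall>x \<in> lists (inp C). \<forall>cs t. accepting_conf C (run C x cs t) \<longrightarrow>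
        (\<exists>t' < T (length x). accepting_conf C (run C x cs t')))"

definition is_paca :: "paca \<Rightarrow> bool" where
  "is_paca C \<longleftrightarrow> wf_paca C \<and> (\<exists>T. has_time_complexity C T)"

definition coin_space :: "nat \<Rightarrow> nat \<Rightarrow> (nat \<Rightarrow> nat \<Rightarrow> bool) set" where
  "coin_space t n = PiE {..<t} (\<lambda>_. PiE {..<n} (\<lambda>_. UNIV))"

definition accept_prob_within :: "paca \<Rightarrow> nat list \<Rightarrow> nat \<Rightarrow> real" where
  "accept_prob_within C x t =
     real (card {cs \<in> coin_space t (length x). \<exists>s \<le> t. accepting_conf C (run C x cs s)})
     / real (card (coin_space t (length x)))"

text \<open>Probability that some step is accepting = limit (supremum) of the
probabilities of acceptance within t steps (continuity of measure).\<close>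
definition accept_prob :: "paca \<Rightarrow> nat list \<Rightarrow> real" where
  "accept_prob C x = (SUP t. accept_prob_within C x t)"

definition one_sided_paca :: "paca \<Rightarrow> real \<Rightarrow> nat list set \<Rightarrow> bool" where
  "one_sided_paca C p L \<longleftrightarrow> is_paca C \<and>
     (\<forall>x \<in> lists (inp C). (x \<in> L \<longleftrightarrow> accept_prob C x \<ge> 1 - p) \<and>
                         (x \<notin> L \<longleftrightarrow> accept_prob C x = 0))"

definition lang :: "paca \<Rightarrow> nat list set" where
  "lang C = {x \<in> lists (inp C). accept_prob C x > 0}"

end

theory Submission
  imports Defs "HOL-Library.Nat_Bijection"
begin

text \<open>Run two independent copies of C in alternation on the same input, accepting as soon as
  one of them accepts.  This fails only if both copies fail, so the error drops from p to
  p^2, while inputs that C never accepts stay unaccepted; each copy advances every second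
  step, so the time doubles.  Iterating j times with p ^ 2 ^ j \<le> p' yields error p' in time
  2 ^ j \<cdot> T(n).\<close>

lemma length_step [simp]: "length (step C c xs) = length xs"
  by (simp add: step_def)

lemma length_run [simp]: "length (run C x cs t) = length x"
  by (induct t) auto

lemma step_cong: "(\<And>i. i < length xs \<Longrightarrow> c i = c' i) \<Longrightarrow> step C c xs = step C c' xs"
  unfolding step_def by (rule map_cong) auto

lemma run_cong:
  "(\<And>s i. s < t \<Longrightarrow> i < length x \<Longrightarrow> cs s i = cs' s i) \<Longrightarrow> run C x cs t = run C x cs' t"
  by (induct t) (auto intro!: step_cong)

lemma set_step_subset_states:
  assumes "wf_paca C" "set xs \<subseteq> states C"
  shows "set (step C c xs) \<subseteq> states C"
proof
  fix y assume "y \<in> set (step C c xs)"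
  then obtain i where i: "i < length xs" and y: "y = delta C (c i)
        (if i = 0 then None else Some (xs ! (i - 1)))
        (xs ! i)
        (if Suc i = length xs then None else Some (xs ! Suc i))"
    by (auto simp: step_def)
  have nth: "xs ! j \<in> states C" if "j < length xs" for j
    using that assms(2) nth_mem by blast
  have "(if i = 0 then None else Some (xs ! (i - 1))) \<in> insert None (Some ` states C)"
    "(if Suc i = length xs then None else Some (xs ! Suc i)) \<in> insert None (Some ` states C)"
    using i by (auto intro!: imageI nth)
  with i nth assms(1) show "y \<in> states C"
    unfolding y wf_paca_def by blast
qed

lemma set_run_subset_states:
  "wf_paca C \<Longrightarrow> set x \<subseteq> states C \<Longrightarrow> set (run C x cs t) \<subseteq> states C"
  by (induct t) (auto intro: set_step_subset_states[THEN subsetD])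

lemma finite_coin_space: "finite (coin_space t n)"
  unfolding coin_space_def by (intro finite_PiE) auto

lemma card_coin_space: "card (coin_space t n) = 2 ^ (n * t)"
  unfolding coin_space_def by (simp add: card_PiE power_mult)

lemma accept_prob_within_nonneg: "0 \<le> accept_prob_within C x t"
  by (simp add: accept_prob_within_def)

lemma accept_prob_within_le_1: "accept_prob_within C x t \<le> 1"
proof -
  have "card {cs \<in> coin_space t (length x). \<exists>s \<le> t. accepting_conf C (run C x cs s)}
      \<le> card (coin_space t (length x))"
    by (rule card_mono[OF finite_coin_space]) auto
  then show ?thesis
    by (simp add: accept_prob_within_def card_coin_space divide_le_eq_1)
qed

lemma bdd_above_accept_prob_within: "bdd_above (range (accept_prob_within C x))"
  using accept_prob_within_le_1 by (intro bdd_aboveI) blast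

lemma accept_prob_within_le_accept_prob: "accept_prob_within C x t \<le> accept_prob C x"
  unfolding accept_prob_def by (rule cSUP_upper[OF _ bdd_above_accept_prob_within]) simp

lemma accept_prob_le_1: "accept_prob C x \<le> 1"
  unfolding accept_prob_def by (rule cSUP_least) (auto simp: accept_prob_within_le_1)

lemma accept_prob_nonneg: "0 \<le> accept_prob C x"
  using accept_prob_within_le_accept_prob[of C x 0] accept_prob_within_nonneg[of C x 0]
  by linarith

lemma accept_prob_pos_iff: "accept_prob C x > 0 \<longleftrightarrow> (\<exists>cs s. accepting_conf C (run C x cs s))"
proof
  assume "accept_prob C x > 0"
  then obtain t where "accept_prob_within C x t > 0"
    unfolding accept_prob_def using less_cSUP_iff[OF _ bdd_above_accept_prob_within] by blast
  then have "{cs \<in> coin_space t (length x). \<exists>s \<le> t. accepting_conf C (run C x cs s)} \<noteq> {}"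
    unfolding accept_prob_within_def by (metis card.empty div_0 less_irrefl of_nat_0)
  then show "\<exists>cs s. accepting_conf C (run C x cs s)" by blast
next
  assume "\<exists>cs s. accepting_conf C (run C x cs s)"
  then obtain cs s where acc: "accepting_conf C (run C x cs s)" by blast
  \<comment> \<open>only the coins of the first s steps on the cells of x matter\<close>
  define cs' where "cs' = (\<lambda>a\<in>{..<s}. \<lambda>i\<in>{..<length x}. cs a i)"
  have "cs' \<in> coin_space s (length x)" unfolding cs'_def coin_space_def by auto
  moreover have "run C x cs' s = run C x cs s" by (rule run_cong) (simp add: cs'_def)
  ultimately have "cs' \<in> {cs \<in> coin_space s (length x). \<exists>s' \<le> s. accepting_conf C (run C x cs s')}"
    using acc by auto
  then have "card {cs \<in> coin_space s (length x). \<exists>s' \<le> s. accepting_conf C (run C x cs s')} > 0"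
    using finite_coin_space by (subst card_gt_0_iff) auto
  then have "accept_prob_within C x s > 0"
    by (simp add: accept_prob_within_def card_coin_space)
  then show "accept_prob C x > 0" using accept_prob_within_le_accept_prob[of C x s] by linarith
qed

text \<open>A state of the interleaved automaton is a triple (a, b, ph): the states of two
  independent copies of C and the phase ph telling which copy moves next.  Acceptance tests
  the copy that moves next, so every configuration of each copy is tested exactly once.
  The triple (a, a, False) is encoded as a itself, so that input words are their own
  initial configurations.\<close>

definition triple_encode :: "nat \<Rightarrow> nat \<times> nat \<times> bool \<Rightarrow> nat" where
  "triple_encode M = (\<lambda>(a, b, ph). if a = b \<and> \<not> ph \<and> a \<le> M then a
      else M + 1 + prod_encode (a, prod_encode (b, of_bool ph)))"

definition triple_decode :: "nat \<Rightarrow> nat \<Rightarrow> nat \<times> nat \<times> bool" where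
  "triple_decode M n = (if n \<le> M then (n, n, False)
     else case prod_decode (n - M - 1) of (a, r) \<Rightarrow> case prod_decode r of (b, c) \<Rightarrow> (a, b, c \<noteq> 0))"

lemma triple_decode_encode [simp]: "triple_decode M (triple_encode M s) = s"
  by (cases s) (auto simp: triple_encode_def triple_decode_def)

lemma inj_triple_encode: "inj (triple_encode M)"
  by (metis injI triple_decode_encode)

lemma triple_encode_diag: "a \<le> M \<Longrightarrow> triple_encode M (a, a, False) = a"
  by (simp add: triple_encode_def)

definition max_state :: "paca \<Rightarrow> nat" where
  "max_state C = Max (states C)"

definition interleave :: "paca \<Rightarrow> paca" where
  "interleave C =
    (let enc = triple_encode (max_state C); dec = triple_decode (max_state C) in
     \<lparr> states = enc ` (states C \<times> states C \<times> UNIV),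
       inp = inp C,
       acc = enc ` {(a, b, ph). a \<in> states C \<and> b \<in> states C \<and> (if ph then b else a) \<in> acc C},
       delta = (\<lambda>c l q r. case dec q of (a, b, ph) \<Rightarrow>
         if ph then enc (a, delta C c (map_option (fst \<circ> snd \<circ> dec) l) b (map_option (fst \<circ> snd \<circ> dec) r), False)
         else enc (delta C c (map_option (fst \<circ> dec) l) a (map_option (fst \<circ> dec) r), b, True)) \<rparr>)"

lemma inp_interleave [simp]: "inp (interleave C) = inp C"
  by (simp add: interleave_def Let_def)

lemma acc_interleave:
  "acc (interleave C) = triple_encode (max_state C) `
     {(a, b, ph). a \<in> states C \<and> b \<in> states C \<and> (if ph then b else a) \<in> acc C}"
  by (simp add: interleave_def Let_def)

definition interleaved_conf :: "paca \<Rightarrow> nat list \<Rightarrow> nat list \<Rightarrow> bool \<Rightarrow> nat list" where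
  "interleaved_conf C xs ys ph =
     map (\<lambda>i. triple_encode (max_state C) (xs ! i, ys ! i, ph)) [0..<length xs]"

lemma length_interleaved_conf [simp]: "length (interleaved_conf C xs ys ph) = length xs"
  by (simp add: interleaved_conf_def)

lemma step_interleaved_conf_False:
  "length xs = length ys \<Longrightarrow>
    step (interleave C) c (interleaved_conf C xs ys False) = interleaved_conf C (step C c xs) ys True"
  by (intro nth_equalityI) (auto simp: step_def interleaved_conf_def interleave_def Let_def nth_Cons')

lemma step_interleaved_conf_True:
  "length xs = length ys \<Longrightarrow>
    step (interleave C) c (interleaved_conf C xs ys True) = interleaved_conf C xs (step C c ys) False"
  by (intro nth_equalityI) (auto simp: step_def interleaved_conf_def interleave_def Let_def)

lemma interleaved_conf_init:
  assumes "wf_paca C" "set x \<subseteq> states C"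
  shows "interleaved_conf C x x False = x"
proof (rule nth_equalityI)
  fix i assume "i < length (interleaved_conf C x x False)"
  then have "i < length x" by simp
  with assms have "x ! i \<in> states C" "finite (states C)"
    by (auto simp: wf_paca_def)
  then have "x ! i \<le> max_state C"
    unfolding max_state_def by (rule Max_ge[rotated])
  with \<open>i < length x\<close> show "interleaved_conf C x x False ! i = x ! i"
    by (simp add: interleaved_conf_def triple_encode_diag)
qed simp

lemma run_interleave:
  assumes "wf_paca C" "set x \<subseteq> states C"
  shows "run (interleave C) x cs (2 * m) =
           interleaved_conf C (run C x (\<lambda>i. cs (2 * i)) m) (run C x (\<lambda>i. cs (2 * i + 1)) m) False"
      (is ?even)
    and "run (interleave C) x cs (2 * m + 1) =
           interleaved_conf C (run C x (\<lambda>i. cs (2 * i)) (Suc m)) (run C x (\<lambda>i. cs (2 * i + 1)) m) True"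
      (is ?odd)
proof -
  show even: ?even
  proof (induct m)
    case 0
    then show ?case using interleaved_conf_init[OF assms] by simp
  next
    case (Suc m)
    have "2 * Suc m = Suc (Suc (2 * m))" by simp
    with Suc show ?case
      by (simp only: run.simps) (simp add: step_interleaved_conf_False step_interleaved_conf_True)
  qed
  then show ?odd by (simp add: step_interleaved_conf_False)
qed

lemma accepting_interleaved_conf:
  assumes "length xs = length ys" "set xs \<subseteq> states C" "set ys \<subseteq> states C"
  shows "accepting_conf (interleave C) (interleaved_conf C xs ys ph) \<longleftrightarrow>
           accepting_conf C (if ph then ys else xs)"
proof -
  let ?acc = "{(a, b, ph). a \<in> states C \<and> b \<in> states C \<and> (if ph then b else a) \<in> acc C}"
  have "accepting_conf (interleave C) (interleaved_conf C xs ys ph) \<longleftrightarrow>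
          (\<forall>i < length xs. (xs ! i, ys ! i, ph) \<in> ?acc)"
    unfolding accepting_conf_def interleaved_conf_def acc_interleave set_map
    by (simp only: image_subset_iff inj_image_mem_iff[OF inj_triple_encode] set_upt
        atLeast0LessThan Ball_def lessThan_iff)
  also have "\<dots> \<longleftrightarrow> (\<forall>i < length xs. (if ph then ys ! i else xs ! i) \<in> acc C)"
  proof -
    have "xs ! i \<in> states C" "ys ! i \<in> states C" if "i < length xs" for i
      using that assms nth_mem by (metis subsetD)+
    then show ?thesis by auto
  qed
  also have "\<dots> \<longleftrightarrow> accepting_conf C (if ph then ys else xs)"
    using assms(1) by (auto simp: accepting_conf_def set_conv_nth)
  finally show ?thesis .
qed

lemma wf_interleave:
  assumes "wf_paca C"
  shows "wf_paca (interleave C)"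
  unfolding wf_paca_def
proof (intro conjI allI impI)
  let ?M = "max_state C"
  have fin: "finite (states C)" using assms by (simp add: wf_paca_def)
  show "finite (states (interleave C))" using fin by (simp add: interleave_def Let_def)
  show "inp (interleave C) \<subseteq> states (interleave C)"
  proof
    fix a assume "a \<in> inp (interleave C)"
    then have a: "a \<in> states C" using assms by (auto simp: wf_paca_def)
    then have "a = triple_encode ?M (a, a, False)"
      using fin by (simp add: triple_encode_diag max_state_def)
    with a show "a \<in> states (interleave C)" by (auto simp: interleave_def Let_def)
  qed
  show "acc (interleave C) \<subseteq> states (interleave C)" by (auto simp: interleave_def Let_def)
  fix b l q r
  assume "q \<in> states (interleave C) \<and> l \<in> insert None (Some ` states (interleave C))
      \<and> r \<in> insert None (Some ` states (interleave C))"
  then obtain a a' ph where q: "q = triple_encode ?M (a, a', ph)" "a \<in> states C" "a' \<in> states C"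
    and lr: "map_option (fst \<circ> triple_decode ?M) l \<in> insert None (Some ` states C)"
            "map_option (fst \<circ> snd \<circ> triple_decode ?M) l \<in> insert None (Some ` states C)"
            "map_option (fst \<circ> triple_decode ?M) r \<in> insert None (Some ` states C)"
            "map_option (fst \<circ> snd \<circ> triple_decode ?M) r \<in> insert None (Some ` states C)"
    by (auto simp: interleave_def Let_def)
  with assms show "delta (interleave C) b l q r \<in> states (interleave C)"
    unfolding wf_paca_def by (auto simp: interleave_def Let_def)
qed

lemma accepting_run_interleave:
  assumes "wf_paca C" "set x \<subseteq> states C" "k < 2"
  shows "accepting_conf (interleave C) (run (interleave C) x cs (2 * m + k)) \<longleftrightarrow>
           accepting_conf C (run C x (\<lambda>i. cs (2 * i + k)) m)"
proof -
  have "k = 0 \<or> k = 1" using assms(3) by linarith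
  then show ?thesis
    by (elim disjE) (simp_all only: run_interleave[OF assms(1,2)] accepting_interleaved_conf
        length_run set_run_subset_states[OF assms(1,2)] if_True if_False add_0_right)
qed

lemma has_time_complexity_interleave:
  assumes wf: "wf_paca C" and T: "has_time_complexity C T"
  shows "has_time_complexity (interleave C) (\<lambda>n. 2 * T n)"
  unfolding has_time_complexity_def
proof (intro ballI allI impI)
  fix x cs t
  assume x: "x \<in> lists (inp (interleave C))"
    and acc: "accepting_conf (interleave C) (run (interleave C) x cs t)"
  then have xC: "x \<in> lists (inp C)" and xs: "set x \<subseteq> states C"
    using wf by (auto simp: wf_paca_def)
  obtain m k where t: "t = 2 * m + k" and k: "k < 2"
    using div_mod_decomp[of t 2] by (metis mod_less_divisor mult.commute zero_less_numeral)
  let ?cs = "\<lambda>i. cs (2 * i + k)"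
  from acc have "accepting_conf C (run C x ?cs m)"
    unfolding t by (simp only: accepting_run_interleave[OF wf xs k])
  with T xC obtain m' where m': "m' < T (length x)" and "accepting_conf C (run C x ?cs m')"
    unfolding has_time_complexity_def by blast
  then have "accepting_conf (interleave C) (run (interleave C) x cs (2 * m' + k))"
    by (simp only: accepting_run_interleave[OF wf xs k])
  moreover have "2 * m' + k < 2 * T (length x)" using m' k by linarith
  ultimately show "\<exists>t' < 2 * T (length x). accepting_conf (interleave C) (run (interleave C) x cs t')"
    by blast
qed

lemma card_Times_Un_Times_ratio:
  assumes "card S > 0" "A \<subseteq> S"
  shows "card (A \<times> S \<union> S \<times> A) / (card S * card S) = 2 * (card A / card S) - (card A / card S)\<^sup>2"
proof -
  have "finite S" using assms(1) card_gt_0_iff by blast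
  moreover have "A \<times> S \<inter> S \<times> A = A \<times> A" using assms(2) by blast
  moreover have "finite A" using \<open>finite S\<close> assms(2) finite_subset by blast
  ultimately have "card (A \<times> S \<union> S \<times> A) + card A * card A = 2 * card A * card S"
    using card_Un_Int[of "A \<times> S" "S \<times> A"] by (simp add: card_cartesian_product algebra_simps)
  then have "real (card (A \<times> S \<union> S \<times> A) + card A * card A) = real (2 * card A * card S)"
    by (rule arg_cong)
  then have "real (card (A \<times> S \<union> S \<times> A)) + card A * card A = 2 * card A * card S"
    by simp
  with assms(1) show ?thesis by (simp add: field_simps power2_eq_square)
qed

text \<open>Coin sequences of length t for the two copies, together with the coins e of step 2t,
  which do not influence acceptance within 2t+1 steps, make up one coin sequence of length
  2t+1 for the interleaved automaton.\<close>

definition interleave_coins ::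
    "nat \<Rightarrow> ((nat \<Rightarrow> nat \<Rightarrow> bool) \<times> (nat \<Rightarrow> nat \<Rightarrow> bool)) \<times> (nat \<Rightarrow> bool) \<Rightarrow> nat \<Rightarrow> nat \<Rightarrow> bool" where
  "interleave_coins t = (\<lambda>((c0, c1), e). \<lambda>j \<in> {..<2 * t + 1}.
     if j = 2 * t then e else if even j then c0 (j div 2) else c1 (j div 2))"

lemma interleave_coins_nth:
  "i < t \<Longrightarrow> interleave_coins t ((c0, c1), e) (2 * i) = c0 i"
  "i < t \<Longrightarrow> interleave_coins t ((c0, c1), e) (Suc (2 * i)) = c1 i"
  "interleave_coins t ((c0, c1), e) (2 * t) = e"
  by (auto simp: interleave_coins_def)

lemma interleave_coins_in_coin_space:
  assumes "b \<in> (coin_space t n \<times> coin_space t n) \<times> (PiE {..<n} (\<lambda>_. UNIV))"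
  shows "interleave_coins t b \<in> coin_space (2 * t + 1) n"
proof -
  obtain c0 c1 e where b: "b = ((c0, c1), e)" by (metis prod.collapse)
  with assms have rows: "c0 i \<in> PiE {..<n} (\<lambda>_. UNIV)" "c1 i \<in> PiE {..<n} (\<lambda>_. UNIV)"
    if "i < t" for i
    using that by (auto simp: coin_space_def)
  have e: "e \<in> PiE {..<n} (\<lambda>_. UNIV)" using assms b by simp
  have "(if j = 2 * t then e else if even j then c0 (j div 2) else c1 (j div 2))
          \<in> PiE {..<n} (\<lambda>_. UNIV)" if "j < 2 * t + 1" for j
    using that rows[of "j div 2"] e by auto
  then show ?thesis
    unfolding b interleave_coins_def coin_space_def by (simp only: split restrict_PiE_iff) blast
qed

lemma inj_on_interleave_coins:
  "inj_on (interleave_coins t) ((coin_space t n \<times> coin_space t n) \<times> (PiE {..<n} (\<lambda>_. UNIV)))"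
    (is "inj_on _ ?D")
proof (rule inj_onI)
  fix b b' assume mem: "b \<in> ?D" "b' \<in> ?D" and eq: "interleave_coins t b = interleave_coins t b'"
  obtain c0 c1 e d0 d1 f where b: "b = ((c0, c1), e)" "b' = ((d0, d1), f)"
    by (metis prod.collapse)
  have agree: "c0 i = d0 i" "c1 i = d1 i" if "i \<in> {..<t}" for i
    using fun_cong[OF eq, of "2 * i"] fun_cong[OF eq, of "Suc (2 * i)"] that
    by (simp_all add: b interleave_coins_nth)
  from mem have "c0 \<in> coin_space t n" "d0 \<in> coin_space t n" "c1 \<in> coin_space t n" "d1 \<in> coin_space t n"
    by (simp_all add: b)
  then have "c0 = d0" "c1 = d1"
    unfolding coin_space_def by (metis PiE_ext agree(1), metis PiE_ext agree(2))
  moreover have "e = f" using fun_cong[OF eq, of "2 * t"] by (simp add: b interleave_coins_nth)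
  ultimately show "b = b'" by (simp add: b)
qed

lemma run_interleave_coins:
  assumes "s \<le> t"
  shows "run C x (\<lambda>i. interleave_coins t ((c0, c1), e) (2 * i)) s = run C x c0 s"
    and "run C x (\<lambda>i. interleave_coins t ((c0, c1), e) (2 * i + 1)) s = run C x c1 s"
  using assms by (auto intro!: run_cong simp: interleave_coins_nth)

lemma accepting_run_interleave_coins:
  assumes "wf_paca C" "set x \<subseteq> states C"
    and "c \<in> {c0, c1}" "s \<le> t" "accepting_conf C (run C x c s)"
  shows "\<exists>s' \<le> 2 * t + 1.
           accepting_conf (interleave C) (run (interleave C) x (interleave_coins t ((c0, c1), e)) s')"
proof -
  from assms(3) consider "c = c0" | "c = c1" by blast
  then obtain k where k: "k < 2"
    and "run C x (\<lambda>i. interleave_coins t ((c0, c1), e) (2 * i + k)) s = run C x c s"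
  proof cases
    case 1
    then show thesis using that[of 0] run_interleave_coins(1)[OF assms(4)] by simp
  next
    case 2
    then show thesis using that[of 1] run_interleave_coins(2)[OF assms(4)] by simp
  qed
  with assms(5) have "accepting_conf (interleave C)
      (run (interleave C) x (interleave_coins t ((c0, c1), e)) (2 * s + k))"
    by (simp only: accepting_run_interleave[OF assms(1,2) k])
  moreover have "2 * s + k \<le> 2 * t + 1" using assms(4) k by linarith
  ultimately show ?thesis by blast
qed

lemma accept_prob_within_interleave:
  assumes wf: "wf_paca C" and xs: "set x \<subseteq> states C"
  shows "2 * accept_prob_within C x t - (accept_prob_within C x t)\<^sup>2
           \<le> accept_prob_within (interleave C) x (2 * t + 1)"
proof -
  define n where "n = length x"
  define S where "S = coin_space t n"
  define E where "E = PiE {..<n} (\<lambda>_. UNIV :: bool set)"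
  define A where "A = {cs \<in> S. \<exists>s \<le> t. accepting_conf C (run C x cs s)}"
  define A' where "A' = {cs \<in> coin_space (2 * t + 1) n.
                          \<exists>s \<le> 2 * t + 1. accepting_conf (interleave C) (run (interleave C) x cs s)}"
  have "finite A'" by (simp add: A'_def finite_coin_space)
  have AS: "A \<subseteq> S" by (auto simp: A_def)
  have "interleave_coins t ` ((A \<times> S \<union> S \<times> A) \<times> E) \<subseteq> A'"
  proof (rule image_subsetI)
    fix b assume "b \<in> (A \<times> S \<union> S \<times> A) \<times> E"
    moreover obtain c0 c1 e where b: "b = ((c0, c1), e)" by (metis prod.collapse)
    ultimately have c: "((c0, c1), e) \<in> (A \<times> S \<union> S \<times> A) \<times> E" by simp
    then have "interleave_coins t b \<in> coin_space (2 * t + 1) n"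
      using AS by (intro interleave_coins_in_coin_space) (auto simp: b S_def E_def)
    moreover from c obtain c s where "c \<in> {c0, c1}" "s \<le> t" "accepting_conf C (run C x c s)"
      by (auto simp: A_def)
    ultimately show "interleave_coins t b \<in> A'"
      unfolding A'_def b using accepting_run_interleave_coins[OF wf xs] by blast
  qed
  moreover have "inj_on (interleave_coins t) ((A \<times> S \<union> S \<times> A) \<times> E)"
    using AS by (auto intro: inj_on_subset[OF inj_on_interleave_coins] simp: S_def E_def)
  ultimately have "card ((A \<times> S \<union> S \<times> A) \<times> E) \<le> card A'"
    using \<open>finite A'\<close> by (metis card_image card_mono)
  moreover have "card (coin_space (2 * t + 1) n) = card S * card S * card E"
    by (simp add: S_def E_def card_coin_space card_PiE distrib_left flip: power_add)
  moreover have "accept_prob_within (interleave C) x (2 * t + 1)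
      = card A' / card (coin_space (2 * t + 1) n)"
    by (simp add: accept_prob_within_def A'_def n_def)
  ultimately have interleaved_bound: "card ((A \<times> S \<union> S \<times> A) \<times> E) / (card S * card S * card E)
      \<le> accept_prob_within (interleave C) x (2 * t + 1)"
    by (simp add: divide_right_mono)
  have "card S > 0" "card E > 0" by (simp_all add: S_def E_def card_coin_space card_PiE)
  have "accept_prob_within C x t = card A / card S"
    by (simp add: accept_prob_within_def A_def S_def n_def)
  then have "2 * accept_prob_within C x t - (accept_prob_within C x t)\<^sup>2
      = card (A \<times> S \<union> S \<times> A) / (card S * card S)"
    using card_Times_Un_Times_ratio[OF \<open>card S > 0\<close> AS] by simp
  also have "\<dots> = card ((A \<times> S \<union> S \<times> A) \<times> E) / (card S * card S * card E)"
    using \<open>card E > 0\<close> by (simp add: card_cartesian_product)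
  finally show ?thesis using interleaved_bound by linarith
qed

lemma accept_prob_interleave:
  assumes "wf_paca C" "set x \<subseteq> states C"
  shows "2 * accept_prob C x - (accept_prob C x)\<^sup>2 \<le> accept_prob (interleave C) x"
proof (rule field_le_epsilon)
  fix \<epsilon> :: real assume "0 < \<epsilon>"
  define P where "P = accept_prob C x"
  have "P - \<epsilon> / 2 < P" using \<open>0 < \<epsilon>\<close> by simp
  then obtain t where t: "P - \<epsilon> / 2 < accept_prob_within C x t"
    unfolding P_def accept_prob_def using less_cSUP_iff[OF _ bdd_above_accept_prob_within] by blast
  define w where "w = accept_prob_within C x t"
  have w: "0 \<le> w" "w \<le> P" "P \<le> 1"
    by (simp_all add: w_def P_def accept_prob_within_nonneg accept_prob_within_le_accept_prob
        accept_prob_le_1)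
  \<comment> \<open>the map \<open>u \<mapsto> 2u - u\<^sup>2\<close> is 2-Lipschitz on [0,1]\<close>
  have "(P - w) * (2 - P - w) \<le> (P - w) * 2"
    using w by (intro mult_left_mono) auto
  then have "2 * P - P\<^sup>2 \<le> 2 * w - w\<^sup>2 + 2 * (P - w)"
    by (simp add: algebra_simps power2_eq_square)
  also have "\<dots> \<le> accept_prob (interleave C) x + \<epsilon>"
    using accept_prob_within_interleave[OF assms, of t]
      accept_prob_within_le_accept_prob[of "interleave C" x "2 * t + 1"] t
    by (simp add: w_def)
  finally show "2 * accept_prob C x - (accept_prob C x)\<^sup>2 \<le> accept_prob (interleave C) x + \<epsilon>"
    by (simp add: P_def)
qed

lemma accept_prob_interleave_eq_0:
  assumes wf: "wf_paca C" and xs: "set x \<subseteq> states C" and "accept_prob C x = 0"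
  shows "accept_prob (interleave C) x = 0"
proof (rule ccontr)
  assume "accept_prob (interleave C) x \<noteq> 0"
  with accept_prob_nonneg have "accept_prob (interleave C) x > 0"
    by (metis less_eq_real_def)
  then obtain cs t where acc: "accepting_conf (interleave C) (run (interleave C) x cs t)"
    by (auto simp: accept_prob_pos_iff)
  obtain m k where "t = 2 * m + k" "k < 2"
    using div_mod_decomp[of t 2] by (metis mod_less_divisor mult.commute zero_less_numeral)
  with acc have "accepting_conf C (run C x (\<lambda>i. cs (2 * i + k)) m)"
    by (simp only: accepting_run_interleave[OF wf xs])
  then have "accept_prob C x > 0" by (auto simp: accept_prob_pos_iff)
  with assms(3) show False by simp
qed

lemma one_sided_pacaI:
  assumes "is_paca C" "p < 1"
    and "\<And>x. x \<in> lists (inp C) \<Longrightarrow> x \<in> L \<Longrightarrow> 1 - p \<le> accept_prob C x"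
    and "\<And>x. x \<in> lists (inp C) \<Longrightarrow> x \<notin> L \<Longrightarrow> accept_prob C x = 0"
  shows "one_sided_paca C p L"
  using assms unfolding one_sided_paca_def by force

lemma lang_one_sided_paca: "one_sided_paca C p L \<Longrightarrow> p < 1 \<Longrightarrow> lang C = L \<inter> lists (inp C)"
  unfolding one_sided_paca_def lang_def by force

lemma one_sided_paca_mono: "one_sided_paca C q L \<Longrightarrow> q \<le> p \<Longrightarrow> p < 1 \<Longrightarrow> one_sided_paca C p L"
  unfolding one_sided_paca_def by force

lemma is_paca_interleave: "is_paca C \<Longrightarrow> is_paca (interleave C)"
  unfolding is_paca_def using wf_interleave has_time_complexity_interleave by blast

lemma one_sided_paca_interleave:
  assumes C: "one_sided_paca C p L" and p: "0 \<le> p" "p < 1"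
  shows "one_sided_paca (interleave C) (p\<^sup>2) L"
proof (rule one_sided_pacaI)
  have "is_paca C" using C by (simp add: one_sided_paca_def)
  then show "is_paca (interleave C)" by (rule is_paca_interleave)
  show "p\<^sup>2 < 1" using p by (simp add: power_less_one_iff)
next
  fix x assume "x \<in> lists (inp (interleave C))"
  then have x: "x \<in> lists (inp C)" and xs: "set x \<subseteq> states C"
    using C by (auto simp: one_sided_paca_def is_paca_def wf_paca_def)
  have wf: "wf_paca C" using C by (simp add: one_sided_paca_def is_paca_def)
  show "1 - p\<^sup>2 \<le> accept_prob (interleave C) x" if "x \<in> L"
  proof -
    have "1 - accept_prob C x \<le> p" using C x that by (auto simp: one_sided_paca_def)
    moreover have "0 \<le> 1 - accept_prob C x" using accept_prob_le_1 by simp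
    ultimately have "(1 - accept_prob C x)\<^sup>2 \<le> p\<^sup>2" by (rule power_mono)
    then have "1 - p\<^sup>2 \<le> 2 * accept_prob C x - (accept_prob C x)\<^sup>2"
      by (simp add: power2_eq_square algebra_simps)
    with accept_prob_interleave[OF wf xs] show ?thesis by linarith
  qed
  show "accept_prob (interleave C) x = 0" if "x \<notin> L"
    using C x that accept_prob_interleave_eq_0[OF wf xs] by (auto simp: one_sided_paca_def)
qed

lemma inp_interleave_iter [simp]: "inp ((interleave ^^ j) C) = inp C"
  by (induct j) simp_all

lemma one_sided_paca_interleave_iter:
  assumes "one_sided_paca C p L" "0 \<le> p" "p < 1"
  shows "one_sided_paca ((interleave ^^ j) C) (p ^ 2 ^ j) L"
proof (induct j)
  case (Suc j)
  moreover have "0 \<le> p ^ 2 ^ j" "p ^ 2 ^ j < 1"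
    using assms(2,3) by (simp_all add: power_less_one_iff)
  ultimately have "one_sided_paca (interleave ((interleave ^^ j) C)) ((p ^ 2 ^ j)\<^sup>2) L"
    by (intro one_sided_paca_interleave)
  then show ?case by (simp add: power_mult[symmetric] mult.commute)
qed (use assms in simp)

lemma wf_interleave_iter: "wf_paca C \<Longrightarrow> wf_paca ((interleave ^^ j) C)"
  by (induct j) (simp_all add: wf_interleave)

lemma has_time_complexity_interleave_iter:
  assumes "wf_paca C" "has_time_complexity C T"
  shows "has_time_complexity ((interleave ^^ j) C) (\<lambda>n. 2 ^ j * T n)"
proof (induct j)
  case (Suc j)
  then show ?case
    using has_time_complexity_interleave[OF wf_interleave_iter[OF assms(1)]]
    by (simp add: mult.assoc)
qed (use assms in simp)

theorem mainTheorem6: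
  fixes p p' :: real and C :: paca and L :: "nat list set"
  assumes "0 < p" "p < 1" "0 < p'" "p' < 1" "p' < p"
    and "one_sided_paca C p L"
  shows "\<exists>C'. one_sided_paca C' p' L \<and> lang C' = lang C \<and>
           (\<forall>T. has_time_complexity C T \<longrightarrow>
              (\<exists>T'. has_time_complexity C' T' \<and>
                    (\<lambda>n. real (T' n)) \<in> O(\<lambda>n. real (T n))))"
proof -
  obtain j where "p ^ j < p'" using real_arch_pow_inv[OF assms(3,2)] by blast
  moreover have "p ^ 2 ^ j \<le> p ^ j"
    using assms(1,2) by (intro power_decreasing) (simp_all add: less_imp_le)
  ultimately have err: "p ^ 2 ^ j \<le> p'" by linarith
  define C' where "C' = (interleave ^^ j) C"
  have C': "one_sided_paca C' (p ^ 2 ^ j) L"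
    unfolding C'_def using one_sided_paca_interleave_iter assms(1,2,6) by simp
  have "one_sided_paca C' p' L" using one_sided_paca_mono[OF C' err assms(4)] .
  moreover have "lang C' = lang C"
    using lang_one_sided_paca[OF C'] lang_one_sided_paca[OF assms(6,2)] assms(1,2)
    by (simp add: C'_def power_less_one_iff)
  moreover have "has_time_complexity C' (\<lambda>n. 2 ^ j * T n)" if "has_time_complexity C T" for T
    using has_time_complexity_interleave_iter[OF _ that] assms(6)
    by (simp add: C'_def one_sided_paca_def is_paca_def)
  moreover have "(\<lambda>n. real (2 ^ j * T n)) \<in> O(\<lambda>n. real (T n))" for T :: "nat \<Rightarrow> nat"
    by simp
  ultimately show ?thesis by blast
qed

end
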